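(* With optimal play by both players, the transversal $3$-game is a draw: each of the two players has a strategy guaranteeing that they do not lose.
   Context: A transversal of an $n\times n$ grid is a set of $n$ cells no two of which lie in the same row or the same column. The transversal $n$-game is played on an $n\times n$ grid by two players who alternate moves, player 1 moving first. On each move, the player to move claims one currently unoccupied cell (player 1 marks it $X$, player 2 marks it $O$). The first player (if any) to have claimed all $n$ cells of some transversal wins. If the grid becomes completely filled and neither player has claimed a transversal, the game is a draw. *)

theory Defs
  imports Main
begin

definition grid :: "nat \<Rightarrow> (nat \<times> nat) set" where
  "grid n = {..<n} \<times> {..<n}"

definition transversal :: "nat \<Rightarrow> (nat \<times> nat) set \<Rightarrow> bool" where
  "transversal n T \<longleftrightarrow> T \<subseteq> grid n \<and> card T = n \<and> inj_on fst T \<and> inj_on snd T"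

text \<open>A play history is the list of claimed cells in order.  Moves with even index
  are made by player 1 (coded 0, marks X), odd index by player 2 (coded 1, marks O).\<close>
definition claimed :: "nat \<Rightarrow> (nat \<times> nat) list \<Rightarrow> (nat \<times> nat) set" where
  "claimed p h = {h ! k | k. k < length h \<and> k mod 2 = p}"

definition has_transversal :: "nat \<Rightarrow> (nat \<times> nat) set \<Rightarrow> bool" where
  "has_transversal n S \<longleftrightarrow> (\<exists>T. transversal n T \<and> T \<subseteq> S)"

definition game_over :: "nat \<Rightarrow> (nat \<times> nat) list \<Rightarrow> bool" where
  "game_over n h \<longleftrightarrow> has_transversal n (claimed 0 h) \<or> has_transversal n (claimed 1 h)
      \<or> length h = n * n"

definition legal_play :: "nat \<Rightarrow> (nat \<times> nat) list \<Rightarrow> bool" where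
  "legal_play n h \<longleftrightarrow> distinct h \<and> set h \<subseteq> grid n \<and>
      (\<forall>k < length h. \<not> game_over n (take k h))"

definition follows :: "nat \<Rightarrow> ((nat \<times> nat) list \<Rightarrow> nat \<times> nat) \<Rightarrow> (nat \<times> nat) list \<Rightarrow> bool" where
  "follows p s h \<longleftrightarrow> (\<forall>k < length h. k mod 2 = p \<longrightarrow> h ! k = s (take k h))"

definition legal_strategy :: "nat \<Rightarrow> nat \<Rightarrow> ((nat \<times> nat) list \<Rightarrow> nat \<times> nat) \<Rightarrow> bool" where
  "legal_strategy n p s \<longleftrightarrow> (\<forall>h. legal_play n h \<and> \<not> game_over n h \<and> length h mod 2 = p
      \<and> follows p s h \<longrightarrow> s h \<in> grid n - set h)"

definition nonlosing_strategy :: "nat \<Rightarrow> nat \<Rightarrow> ((nat \<times> nat) list \<Rightarrow> nat \<times> nat) \<Rightarrow> bool" where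
  "nonlosing_strategy n p s \<longleftrightarrow> legal_strategy n p s \<and>
     (\<forall>h. legal_play n h \<and> game_over n h \<and> follows p s h \<longrightarrow>
        \<not> has_transversal n (claimed (1 - p) h))"

end

theory Submission
  imports Defs "HOL-Combinatorics.Multiset_Permutations"
begin

text \<open>A transversal of the \<open>n \<times> n\<close> grid is the graph of a permutation of \<open>{..<n}\<close>, so for
  \<open>n = 3\<close> there are only six of them and the game tree is small. Both players can play
  the same greedy blocking strategy: claim a free cell lying on the opponent's most advanced
  still-open transversals. A checker that follows the strategy for one player and tries every
  reply of the other is proved sound for arbitrary \<open>n\<close>, and evaluating it on the \<open>3 \<times> 3\<close> grid
  confirms that the strategy never loses, for either player.\<close>

lemma image_eq_lessThan_if_inj_on:
  assumes "inj_on f T" "f ` T \<subseteq> {..<n}" "card T = n"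
  shows "f ` T = {..<n}"
  using assms by (simp add: card_image card_subset_eq)

lemma set_zip_upt:
  assumes "length xs = n"
  shows "set (zip [0..<n] xs) = (\<lambda>i. (i, xs ! i)) ` {..<n}"
  using assms by (force simp: set_zip)

lemma transversal_iff_permutation:
  "transversal n T \<longleftrightarrow> (\<exists>\<sigma>\<in>permutations_of_set {..<n}. T = set (zip [0..<n] \<sigma>))"
proof
  assume T: "transversal n T"
  then have grid: "T \<subseteq> {..<n} \<times> {..<n}" and card: "card T = n" and inj_fst: "inj_on fst T"
    and inj_snd: "inj_on snd T"
    by (auto simp: transversal_def grid_def)
  have rows: "fst ` T = {..<n}"
    by (rule image_eq_lessThan_if_inj_on[OF inj_fst _ card]) (use grid in auto)
  have cols: "snd ` T = {..<n}"
    by (rule image_eq_lessThan_if_inj_on[OF inj_snd _ card]) (use grid in auto)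
  define cell where "cell = the_inv_into T fst"
  have fst_cell: "fst (cell i) = i" if "i < n" for i
    unfolding cell_def by (rule f_the_inv_into_f[OF inj_fst]) (use that rows in auto)
  have T_eq: "T = cell ` {..<n}"
    unfolding cell_def rows[symmetric] by (rule the_inv_into_onto[OF inj_fst, symmetric])
  define \<sigma> where "\<sigma> = map (snd \<circ> cell) [0..<n]"
  have "inj_on (snd \<circ> cell) {..<n}"
  proof (rule comp_inj_on)
    show "inj_on cell {..<n}"
      unfolding cell_def rows[symmetric] by (rule inj_on_the_inv_into[OF inj_fst])
    show "inj_on snd (cell ` {..<n})"
      using inj_snd T_eq by simp
  qed
  then have "distinct \<sigma>"
    by (simp add: \<sigma>_def distinct_map atLeast0LessThan)
  moreover have "set \<sigma> = {..<n}"
    using cols T_eq by (simp add: \<sigma>_def image_comp atLeast0LessThan)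
  moreover have "T = set (zip [0..<n] \<sigma>)"
  proof -
    have "(\<lambda>i. (i, \<sigma> ! i)) ` {..<n} = cell ` {..<n}"
      using fst_cell by (intro image_cong) (auto simp: \<sigma>_def prod_eq_iff)
    then show ?thesis
      using T_eq by (simp add: set_zip_upt \<sigma>_def)
  qed
  ultimately show "\<exists>\<sigma>\<in>permutations_of_set {..<n}. T = set (zip [0..<n] \<sigma>)"
    by blast
next
  assume "\<exists>\<sigma>\<in>permutations_of_set {..<n}. T = set (zip [0..<n] \<sigma>)"
  then obtain \<sigma> where set_\<sigma>: "set \<sigma> = {..<n}" and dist: "distinct \<sigma>"
    and T: "T = set (zip [0..<n] \<sigma>)"
    by (auto simp: permutations_of_set_def)
  have len: "length \<sigma> = n"
    using distinct_card[OF dist] set_\<sigma> by simp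
  define cell where "cell i = (i, \<sigma> ! i)" for i
  have T_eq: "T = cell ` {..<n}"
    using T by (simp add: set_zip_upt[OF len] cell_def)
  have inj_cell: "inj_on cell {..<n}"
    by (rule inj_onI) (simp add: cell_def)
  have "\<sigma> ! i < n" if "i < n" for i
    using nth_mem[of i \<sigma>] that len set_\<sigma> by simp
  then have "T \<subseteq> grid n"
    by (auto simp: T_eq cell_def grid_def)
  moreover have "card T = n"
    using card_image[OF inj_cell] by (simp add: T_eq)
  moreover have "inj_on fst T"
    unfolding T_eq by (rule inj_on_imageI) (simp add: cell_def comp_def)
  moreover have "inj_on snd T"
    unfolding T_eq
    by (rule inj_on_imageI) (use inj_on_nth[OF dist] len in \<open>simp add: cell_def comp_def\<close>)
  ultimately show "transversal n T"
    by (simp add: transversal_def)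
qed

definition cells :: "nat \<Rightarrow> (nat \<times> nat) list" where
  "cells n = List.product [0..<n] [0..<n]"

definition free_cells :: "nat \<Rightarrow> (nat \<times> nat) list \<Rightarrow> (nat \<times> nat) list" where
  "free_cells n h = filter (\<lambda>c. c \<notin> set h) (cells n)"

definition claimed_list :: "nat \<Rightarrow> (nat \<times> nat) list \<Rightarrow> (nat \<times> nat) list" where
  "claimed_list p h = map ((!) h) (filter (\<lambda>k. k mod 2 = p) [0..<length h])"

definition transversal_lists :: "nat \<Rightarrow> (nat \<times> nat) list list" where
  "transversal_lists n = map (zip [0..<n]) (permutations_of_set_list [0..<n])"

definition contains_transversal :: "(nat \<times> nat) list list \<Rightarrow> (nat \<times> nat) list \<Rightarrow> bool" where
  "contains_transversal ts L \<longleftrightarrow> (\<exists>t\<in>set ts. set t \<subseteq> set L)"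

definition finished :: "nat \<Rightarrow> (nat \<times> nat) list list \<Rightarrow> (nat \<times> nat) list \<Rightarrow> bool" where
  "finished n ts h \<longleftrightarrow> contains_transversal ts (claimed_list 0 h) \<or>
     contains_transversal ts (claimed_list 1 h) \<or> length h = n * n"

definition threat ::
    "(nat \<times> nat) list list \<Rightarrow> (nat \<times> nat) list \<Rightarrow> (nat \<times> nat) list \<Rightarrow> nat \<times> nat \<Rightarrow> nat" where
  "threat ts own opp c =
     (\<Sum>t\<leftarrow>filter (\<lambda>t. c \<in> set t \<and> set t \<inter> set own = {}) ts.
        length (filter (\<lambda>x. x \<in> set opp) t))"

text \<open>The mover claims a free cell on the opponent's most advanced transversals among those
  the mover has not yet blocked; the threat is negated because the library only offers
  \<^const>\<open>arg_min_list\<close> (which returns the first optimal cell).\<close>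
definition blocking_move :: "nat \<Rightarrow> (nat \<times> nat) list list \<Rightarrow> (nat \<times> nat) list \<Rightarrow> nat \<times> nat" where
  "blocking_move n ts h =
     arg_min_list
       (\<lambda>c. - int (threat ts (claimed_list (length h mod 2) h) (claimed_list (1 - length h mod 2) h) c))
       (free_cells n h)"

text \<open>Running out of
  fuel counts as failure, so acceptance is sound for any fuel. The transversals are passed as
  a list \<open>ts\<close> so that evaluation computes them only once.\<close>
fun cannot_lose :: "nat \<Rightarrow> (nat \<times> nat) list list \<Rightarrow> ((nat \<times> nat) list \<Rightarrow> nat \<times> nat) \<Rightarrow>
    nat \<Rightarrow> nat \<Rightarrow> (nat \<times> nat) list \<Rightarrow> bool" where
  "cannot_lose n ts s p 0 h = False"
| "cannot_lose n ts s p (Suc fuel) h =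
     (if finished n ts h then \<not> contains_transversal ts (claimed_list (1 - p) h)
      else if length h mod 2 = p then
        (let c = s h in c \<in> set (free_cells n h) \<and> cannot_lose n ts s p fuel (h @ [c]))
      else list_all (\<lambda>c. cannot_lose n ts s p fuel (h @ [c])) (free_cells n h))"

lemma set_cells: "set (cells n) = grid n"
  by (auto simp: cells_def grid_def)

lemma set_free_cells: "set (free_cells n h) = grid n - set h"
  by (auto simp: free_cells_def set_cells)

lemma set_claimed_list: "set (claimed_list p h) = claimed p h"
  by (auto simp: claimed_list_def claimed_def)

lemma set_transversal_lists: "set ` set (transversal_lists n) = {T. transversal n T}"
proof -
  have "set (permutations_of_set_list [0..<n]) = permutations_of_set {..<n}"
    using permutations_of_list[of "[0..<n]"] by (simp add: atLeast0LessThan)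
  then show ?thesis
    by (auto simp: transversal_lists_def transversal_iff_permutation image_image)
qed

lemma has_transversal_iff_contains:
  assumes "set ` set ts = {T. transversal n T}"
  shows "has_transversal n (set L) \<longleftrightarrow> contains_transversal ts L"
proof -
  have "transversal n T \<longleftrightarrow> T \<in> set ` set ts" for T
    using assms by simp
  then show ?thesis
    by (auto simp: has_transversal_def contains_transversal_def)
qed

lemma game_over_iff_finished:
  assumes "set ` set ts = {T. transversal n T}"
  shows "game_over n h \<longleftrightarrow> finished n ts h"
  using has_transversal_iff_contains[OF assms]
  by (simp add: game_over_def finished_def set_claimed_list[symmetric])

lemma legal_play_appendD:
  assumes "legal_play n (h @ c # t)"
  shows "\<not> game_over n h" "c \<in> grid n - set h"
proof -
  have "\<forall>k < length (h @ c # t). \<not> game_over n (take k (h @ c # t))"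
    using assms unfolding legal_play_def by blast
  moreover have "length h < length (h @ c # t)"
    by simp
  ultimately have "\<not> game_over n (take (length h) (h @ c # t))"
    by blast
  then show "\<not> game_over n h"
    by simp
  have "distinct (h @ c # t)" "set (h @ c # t) \<subseteq> grid n"
    using assms unfolding legal_play_def by blast+
  then show "c \<in> grid n - set h"
    by auto
qed

lemma follows_appendD:
  assumes "follows p s (h @ c # t)" "length h mod 2 = p"
  shows "c = s h"
proof -
  have "length h < length (h @ c # t)"
    by simp
  then have "(h @ c # t) ! length h = s (take (length h) (h @ c # t))"
    using assms unfolding follows_def by blast
  then show ?thesis
    by simp
qed

lemma cannot_lose_append:
  assumes ts: "set ` set ts = {T. transversal n T}"
    and "cannot_lose n ts s p fuel h" "legal_play n (h @ t)" "follows p s (h @ t)"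
  shows "\<exists>fuel'. cannot_lose n ts s p fuel' (h @ t)"
  using assms(2-)
proof (induction t arbitrary: h fuel)
  case Nil
  then show ?case
    by auto
next
  case (Cons c t)
  obtain f where fuel: "fuel = Suc f"
    using Cons.prems(1) by (cases fuel) auto
  have not_finished: "\<not> finished n ts h"
    using legal_play_appendD(1)[OF Cons.prems(2)] game_over_iff_finished[OF ts] by simp
  have "cannot_lose n ts s p f (h @ [c])"
  proof (cases "length h mod 2 = p")
    case True
    then have "c = s h"
      using follows_appendD[OF Cons.prems(3)] by simp
    then show ?thesis
      using Cons.prems(1) fuel not_finished True by (simp add: Let_def)
  next
    case False
    have "list_all (\<lambda>c. cannot_lose n ts s p f (h @ [c])) (free_cells n h)"
      using Cons.prems(1) fuel not_finished False by simp
    moreover have "c \<in> set (free_cells n h)"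
      using legal_play_appendD(2)[OF Cons.prems(2)] by (simp add: set_free_cells)
    ultimately show ?thesis
      by (simp add: list_all_iff)
  qed
  then show ?case
    using Cons.IH[where h = "h @ [c]" and fuel = f] Cons.prems(2,3) by simp
qed

lemma nonlosing_strategy_if_cannot_lose:
  assumes ts: "set ` set ts = {T. transversal n T}"
    and start: "cannot_lose n ts s p fuel []"
  shows "nonlosing_strategy n p s"
  unfolding nonlosing_strategy_def legal_strategy_def
proof (intro conjI allI impI; elim conjE)
  fix h
  assume "legal_play n h" "follows p s h"
  then obtain fuel' where "cannot_lose n ts s p fuel' h"
    using cannot_lose_append[OF ts start, of h] by auto
  then obtain f where checked: "cannot_lose n ts s p (Suc f) h"
    by (cases fuel') auto
  show "\<not> has_transversal n (claimed (1 - p) h)" if "game_over n h"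
  proof -
    have "\<not> contains_transversal ts (claimed_list (1 - p) h)"
      using checked that game_over_iff_finished[OF ts] by simp
    then show ?thesis
      using has_transversal_iff_contains[OF ts] set_claimed_list by metis
  qed
  show "s h \<in> grid n - set h" if "\<not> game_over n h" "length h mod 2 = p"
    using checked that game_over_iff_finished[OF ts] by (simp add: Let_def set_free_cells)
qed

theorem mainTheorem2:
  shows "(\<exists>s. nonlosing_strategy 3 0 s) \<and> (\<exists>s. nonlosing_strategy 3 1 s)"
proof -
  let ?ts = "transversal_lists 3"
  have "cannot_lose 3 ?ts (blocking_move 3 ?ts) 0 10 []"
    by code_simp
  moreover have "cannot_lose 3 ?ts (blocking_move 3 ?ts) 1 10 []"
    by code_simp
  ultimately show ?thesis
    using nonlosing_strategy_if_cannot_lose[OF set_transversal_lists] by blast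
qed

end
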